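(* Consider the semi-discrete system $\frac{d\mathbf{u}}{dt}=\mathbf{R}(\mathbf{u})+\mathbf{B}(t)\mathbf{u}$ and the integrating-factor third-order SSPRK scheme $\mathbf{u}^{(1)}=e^{\mathbf{C}(t_n,\Delta t)}[\mathbf{u}^n+\Delta t\,\mathbf{R}(\mathbf{u}^n)]$, $\mathbf{u}^{(2)}=\tfrac34 e^{\mathbf{C}(t_n,\Delta t/2)}\mathbf{u}^n+\tfrac14 e^{-\mathbf{C}(t_n+\Delta t/2,\Delta t/2)}[\mathbf{u}^{(1)}+\Delta t\,\mathbf{R}(\mathbf{u}^{(1)})]$, $\mathbf{u}^{n+1}=\tfrac13 e^{\mathbf{C}(t_n,\Delta t)}\mathbf{u}^n+\tfrac23 e^{\mathbf{C}(t_n+\Delta t/2,\Delta t/2)}[\mathbf{u}^{(2)}+\Delta t\,\mathbf{R}(\mathbf{u}^{(2)})]$ (which, when $\mathbf{B}$ is independent of $t$, reads with $e^{\mathbf{C}(t,\tau)}=e^{\tau\mathbf{B}}$). Assume the forward Euler scheme is positivity preserving, i.e. $\mathbf{u}\in\mathbb{U}_{\mathrm{ad}}$ implies $\mathbf{u}+\Delta t\,\mathbf{R}(\mathbf{u})\in\mathbb{U}_{\mathrm{ad}}$ for any $\Delta t\le\Delta t^*(\mathbf{u})$. Then this third-order SSPRK scheme is positivity preserving under the same restriction on the time step: if $\mathbf{u}^n\in\mathbb{U}_{\mathrm{ad}}$ and $\Delta t$ satisfies the forward Euler restriction at each stage, then $\mathbf{u}^{n+1}\in\mathbb{U}_{\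mathrm{ad}}$.
   Context: Ten-Moment equations in 2-D: conservative variable per grid point $\mathbf{u}=(\rho,\rho v_1,\rho v_2,E_{11},E_{12},E_{22})^\top$, pressure tensor $p_{11}=2E_{11}-\rho v_1^2$, $p_{12}=2E_{12}-\rho v_1v_2$, $p_{22}=2E_{22}-\rho v_2^2$. $\mathbb{U}_{\mathrm{ad}}=\{\mathbf{u}\in\mathbb{R}^6:\rho>0,\ \mathbf{p}\text{ positive definite}\}$; a vector of grid values is said to lie in $\mathbb{U}_{\mathrm{ad}}$ if the state at every grid point does. $\mathbf{R}$ is the spatial (finite difference) discretization of $-\partial_x\mathbf{f}-\partial_y\mathbf{g}$. The source is $\mathbf{B}(t)\mathbf{u}$ applied pointwise, with $\mathbf{B}(t)$ the $6\times6$ matrix whose only nonzero entries are $B_{21}=a$, $B_{31}=b$, $B_{42}=a$, $B_{52}=b/2$, $B_{53}=a/2$, $B_{63}=b$, where $a(t)=-\frac12\partial_xW$, $b(t)=-\frac12\partial_yW$ for a given potential $W(x,y,t)$ (evaluated at the grid point). $\mathbf{C}(t,\tau)=\int_t^{t+\tau}\mathbf{B}(s)\,ds$, and with $\hat a=\int_t^{t+\tau}a$, $\hat b=\int_t^{t+\tau}b$, $e^{\mathbf{C}(t,\tau)}$ is the lower-triangular matrix with unit diagonal and entries $(2,1)=\hat a$, $(3,1)=\hat b$, $(4,1)=\hat a^2/2$, $(4,2)=\hat a$, $(5,1)=\hat a\hat b/2$, $(5,2)=\hat b/2$, $(5,3)=\hat a/2$, $(6,1)=\hat b^2/2$, $(6,3)=\hat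 b$, all other entries zero. *)

theory Defs
  imports "HOL-Analysis.Analysis"
begin

text \<open>A state at one grid point: u = (rho, rho v1, rho v2, E11, E12, E22), stored as real^6
  with components u$1, ..., u$6.\<close>

type_synonym state = "real ^ 6"

definition p11 :: "state \<Rightarrow> real" where
  "p11 u = 2 * u$4 - (u$2)^2 / u$1"
definition p12 :: "state \<Rightarrow> real" where
  "p12 u = 2 * u$5 - (u$2) * (u$3) / u$1"
definition p22 :: "state \<Rightarrow> real" where
  "p22 u = 2 * u$6 - (u$3)^2 / u$1"

definition pressure_posdef :: "state \<Rightarrow> bool" where
  "pressure_posdef u \<longleftrightarrow>
     (\<forall>z1 z2::real. (z1, z2) \<noteq> (0, 0) \<longrightarrow>
        p11 u * z1^2 + 2 * p12 u * z1 * z2 + p22 u * z2^2 > 0)"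

definition in_Uad :: "state \<Rightarrow> bool" where
  "in_Uad u \<longleftrightarrow> u$1 > 0 \<and> pressure_posdef u"

definition grid_in_Uad :: "('g \<Rightarrow> state) \<Rightarrow> bool" where
  "grid_in_Uad U \<longleftrightarrow> (\<forall>p. in_Uad (U p))"

definition coef_a :: "(real \<Rightarrow> real \<Rightarrow> real \<Rightarrow> real) \<Rightarrow> ('g \<Rightarrow> real) \<Rightarrow> ('g \<Rightarrow> real) \<Rightarrow> 'g \<Rightarrow> real \<Rightarrow> real" where
  "coef_a W X Y p t = - (1/2) * deriv (\<lambda>x. W x (Y p) t) (X p)"
definition coef_b :: "(real \<Rightarrow> real \<Rightarrow> real \<Rightarrow> real) \<Rightarrow> ('g \<Rightarrow> real) \<Rightarrow> ('g \<Rightarrow> real) \<Rightarrow> 'g \<Rightarrow> real \<Rightarrow> real" where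
  "coef_b W X Y p t = - (1/2) * deriv (\<lambda>y. W (X p) y t) (Y p)"

definition Bmat :: "real \<Rightarrow> real \<Rightarrow> real^6^6" where
  "Bmat a b = vector [
     vector [0, 0, 0, 0, 0, 0],
     vector [a, 0, 0, 0, 0, 0],
     vector [b, 0, 0, 0, 0, 0],
     vector [0, a, 0, 0, 0, 0],
     vector [0, b/2, a/2, 0, 0, 0],
     vector [0, 0, b, 0, 0, 0]]"

text \<open>The matrix exponential e^C in closed form, in terms of ah = int a, bh = int b.\<close>
definition expCmat :: "real \<Rightarrow> real \<Rightarrow> real^6^6" where
  "expCmat ah bh = vector [
     vector [1, 0, 0, 0, 0, 0],
     vector [ah, 1, 0, 0, 0, 0],
     vector [bh, 0, 1, 0, 0, 0],
     vector [ah^2/2, ah, 0, 1, 0, 0],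
     vector [ah*bh/2, bh/2, ah/2, 0, 1, 0],
     vector [bh^2/2, 0, bh, 0, 0, 1]]"

definition eC :: "(real \<Rightarrow> real \<Rightarrow> real \<Rightarrow> real) \<Rightarrow> ('g \<Rightarrow> real) \<Rightarrow> ('g \<Rightarrow> real) \<Rightarrow> 'g \<Rightarrow> real \<Rightarrow> real \<Rightarrow> real^6^6" where
  "eC W X Y p t tau = expCmat (integral {t..t+tau} (coef_a W X Y p)) (integral {t..t+tau} (coef_b W X Y p))"

definition eCneg :: "(real \<Rightarrow> real \<Rightarrow> real \<Rightarrow> real) \<Rightarrow> ('g \<Rightarrow> real) \<Rightarrow> ('g \<Rightarrow> real) \<Rightarrow> 'g \<Rightarrow> real \<Rightarrow> real \<Rightarrow> real^6^6" where
  "eCneg W X Y p t tau = expCmat (- integral {t..t+tau} (coef_a W X Y p)) (- integral {t..t+tau} (coef_b W X Y p))"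

definition fe_step :: "(('g \<Rightarrow> state) \<Rightarrow> ('g \<Rightarrow> state)) \<Rightarrow> real \<Rightarrow> ('g \<Rightarrow> state) \<Rightarrow> ('g \<Rightarrow> state)" where
  "fe_step R dt U = (\<lambda>p. U p + dt *\<^sub>R R U p)"

definition if_stage1 where
  "if_stage1 R W X Y tn dt U = (\<lambda>p. eC W X Y p tn dt *v fe_step R dt U p)"

definition if_stage2 where
  "if_stage2 R W X Y tn dt U =
     (let U1 = if_stage1 R W X Y tn dt U in
      (\<lambda>p. (3/4) *\<^sub>R (eC W X Y p tn (dt/2) *v U p)
         + (1/4) *\<^sub>R (eCneg W X Y p (tn + dt/2) (dt/2) *v fe_step R dt U1 p)))"

definition if_ssprk3 where
  "if_ssprk3 R W X Y tn dt U =
     (let U2 = if_stage2 R W X Y tn dt U in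
      (\<lambda>p. (1/3) *\<^sub>R (eC W X Y p tn dt *v U p)
         + (2/3) *\<^sub>R (eC W X Y p (tn + dt/2) (dt/2) *v fe_step R dt U2 p)))"

end

theory Submission
  imports Defs
begin

text \<open>The matrix \<open>e\<^sup>C\<close> acts on a grid state as the Galilean boost \<open>v \<mapsto> v + (a, b)\<close>: it
  keeps the density and the pressure tensor, hence maps admissible states to admissible states.
  Moreover the admissible set is a convex cone: the pressure form in direction \<open>z\<close> equals
  \<open>2 E(z) - (m \<bullet> z)\<^sup>2 / \<rho>\<close>, where \<open>E(z)\<close> is linear in the state and \<open>(m \<bullet> z)\<^sup>2 / \<rho>\<close> is the
  perspective of a square, hence positively homogeneous and subadditive. Every stage of the
  scheme is a positive combination of boosts of admissible states and of forward Euler steps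
  of admissible states, so admissibility propagates from \<open>u\<^sup>n\<close> through both stages to \<open>u\<^sup>n\<^sup>+\<^sup>1\<close>.\<close>

lemma exhaust_6:
  fixes x :: 6
  shows "x = 1 \<or> x = 2 \<or> x = 3 \<or> x = 4 \<or> x = 5 \<or> x = 6"
proof (induct x)
  case (of_int z)
  then have "z = 0 \<or> z = 1 \<or> z = 2 \<or> z = 3 \<or> z = 4 \<or> z = 5" by fastforce
  then show ?case by auto
qed

lemma UNIV_6: "UNIV = {1, 2, 3, 4, 5, 6::6}"
  using exhaust_6 by auto

lemma sum_6: "sum f (UNIV::6 set) = f 1 + f 2 + f 3 + f 4 + f 5 + f 6"
  unfolding UNIV_6 by (simp add: ac_simps)

lemma vector_6 [simp]:
  "(vector [x1,x2,x3,x4,x5,x6] :: ('a::zero)^6)$1 = x1"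
  "(vector [x1,x2,x3,x4,x5,x6] :: ('a::zero)^6)$2 = x2"
  "(vector [x1,x2,x3,x4,x5,x6] :: ('a::zero)^6)$3 = x3"
  "(vector [x1,x2,x3,x4,x5,x6] :: ('a::zero)^6)$4 = x4"
  "(vector [x1,x2,x3,x4,x5,x6] :: ('a::zero)^6)$5 = x5"
  "(vector [x1,x2,x3,x4,x5,x6] :: ('a::zero)^6)$6 = x6"
  unfolding vector_def by simp_all

definition pressure_form :: "state \<Rightarrow> real \<Rightarrow> real \<Rightarrow> real" where
  "pressure_form u z1 z2 = p11 u * z1^2 + 2 * p12 u * z1 * z2 + p22 u * z2^2"

lemma pressure_posdef_iff_form:
  "pressure_posdef u \<longleftrightarrow> (\<forall>z1 z2. (z1, z2) \<noteq> (0, 0) \<longrightarrow> pressure_form u z1 z2 > 0)"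
  unfolding pressure_posdef_def pressure_form_def ..

lemma pressure_form_conv:
  assumes "u$1 \<noteq> 0"
  shows "pressure_form u z1 z2 =
    2 * (u$4 * z1^2 + 2 * u$5 * z1 * z2 + u$6 * z2^2) - (u$2 * z1 + u$3 * z2)^2 / u$1"
  using assms unfolding pressure_form_def p11_def p12_def p22_def
  by (simp add: field_simps power2_eq_square)

text \<open>No sign condition is needed: for \<open>c = 0\<close> both sides vanish because \<open>x / 0 = 0\<close>.\<close>
lemma pressure_form_scaleR: "pressure_form (c *\<^sub>R u) z1 z2 = c * pressure_form u z1 z2"
  by (cases "c = 0") (simp_all add: pressure_form_def p11_def p12_def p22_def
      power2_eq_square field_simps)

lemma square_div_add_le:
  fixes x y r s :: real
  assumes "0 < r" "0 < s"
  shows "(x + y)^2 / (r + s) \<le> x^2 / r + y^2 / s"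
proof -
  have "(x + y)^2 * (r * s) \<le> (r + s) * (x^2 * s + y^2 * r)"
    using zero_le_power2[of "x * s - y * r"] by (simp add: algebra_simps power2_eq_square)
  then show ?thesis
    using assms by (simp add: field_simps)
qed

lemma pressure_form_superadditive:
  assumes "u$1 > 0" "w$1 > 0"
  shows "pressure_form u z1 z2 + pressure_form w z1 z2 \<le> pressure_form (u + w) z1 z2"
proof -
  have "(u$1 + w$1) \<noteq> 0" using assms by simp
  then show ?thesis
    using assms square_div_add_le[of "u$1" "w$1" "u$2 * z1 + u$3 * z2" "w$2 * z1 + w$3 * z2"]
    by (simp add: pressure_form_conv algebra_simps)
qed

lemma in_Uad_scaleR: "0 < c \<Longrightarrow> in_Uad u \<Longrightarrow> in_Uad (c *\<^sub>R u)"
  by (simp add: in_Uad_def pressure_posdef_iff_form pressure_form_scaleR)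

lemma in_Uad_add:
  assumes u: "in_Uad u" and w: "in_Uad w"
  shows "in_Uad (u + w)"
  unfolding in_Uad_def pressure_posdef_iff_form
proof (intro conjI allI impI)
  show "(u + w)$1 > 0" using u w by (simp add: in_Uad_def)
next
  fix z1 z2 :: real
  assume "(z1, z2) \<noteq> (0, 0)"
  then have "pressure_form u z1 z2 > 0" "pressure_form w z1 z2 > 0"
    using u w by (simp_all add: in_Uad_def pressure_posdef_iff_form)
  moreover have "pressure_form u z1 z2 + pressure_form w z1 z2 \<le> pressure_form (u + w) z1 z2"
    using u w by (simp add: in_Uad_def pressure_form_superadditive)
  ultimately show "pressure_form (u + w) z1 z2 > 0"
    by linarith
qed

lemma expCmat_mult_nth:
  "(expCmat a b *v u)$1 = u$1"
  "(expCmat a b *v u)$2 = u$2 + a * u$1"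
  "(expCmat a b *v u)$3 = u$3 + b * u$1"
  "(expCmat a b *v u)$4 = u$4 + a * u$2 + a^2/2 * u$1"
  "(expCmat a b *v u)$5 = u$5 + b/2 * u$2 + a/2 * u$3 + a*b/2 * u$1"
  "(expCmat a b *v u)$6 = u$6 + b * u$3 + b^2/2 * u$1"
  by (simp_all add: expCmat_def matrix_vector_mult_def sum_6 algebra_simps)

lemma pressure_expCmat:
  assumes "u$1 \<noteq> 0"
  shows "p11 (expCmat a b *v u) = p11 u"
    and "p12 (expCmat a b *v u) = p12 u"
    and "p22 (expCmat a b *v u) = p22 u"
  using assms unfolding p11_def p12_def p22_def expCmat_mult_nth
  by (simp_all add: field_simps power2_eq_square)

lemma in_Uad_expCmat: "in_Uad u \<Longrightarrow> in_Uad (expCmat a b *v u)"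
  by (simp add: in_Uad_def pressure_posdef_def pressure_expCmat expCmat_mult_nth)

theorem theorem1:
  fixes R :: "('g \<Rightarrow> state) \<Rightarrow> ('g \<Rightarrow> state)"
    and dtstar :: "('g \<Rightarrow> state) \<Rightarrow> real"
    and W :: "real \<Rightarrow> real \<Rightarrow> real \<Rightarrow> real"
    and X Y :: "'g \<Rightarrow> real"
    and tn dt :: real
    and Uold :: "'g \<Rightarrow> state"
  assumes FE: "\<And>U h. grid_in_Uad U \<Longrightarrow> 0 < h \<Longrightarrow> h \<le> dtstar U \<Longrightarrow> grid_in_Uad (fe_step R h U)"
    and Uold: "grid_in_Uad Uold"
    and dtpos: "0 < dt"
    and dt0: "dt \<le> dtstar Uold"
    and dt1: "dt \<le> dtstar (if_stage1 R W X Y tn dt Uold)"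
    and dt2: "dt \<le> dtstar (if_stage2 R W X Y tn dt Uold)"
  shows "grid_in_Uad (if_ssprk3 R W X Y tn dt Uold)"
proof -
  note in_Uad_rules = in_Uad_expCmat in_Uad_add in_Uad_scaleR
  have "grid_in_Uad (fe_step R dt Uold)"
    using FE Uold dtpos dt0 by blast
  then have stage1: "grid_in_Uad (if_stage1 R W X Y tn dt Uold)"
    unfolding if_stage1_def grid_in_Uad_def eC_def by (simp add: in_Uad_expCmat)
  then have "grid_in_Uad (fe_step R dt (if_stage1 R W X Y tn dt Uold))"
    using FE dtpos dt1 by blast
  then have stage2: "grid_in_Uad (if_stage2 R W X Y tn dt Uold)"
    using Uold unfolding if_stage2_def grid_in_Uad_def eC_def eCneg_def Let_def
    by (simp add: in_Uad_rules)
  then have "grid_in_Uad (fe_step R dt (if_stage2 R W X Y tn dt Uold))"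
    using FE dtpos dt2 by blast
  then show ?thesis
    using Uold unfolding if_ssprk3_def grid_in_Uad_def eC_def Let_def
    by (simp add: in_Uad_rules)
qed

end
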